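(* On a probability space, let $\mathbb{F}=(\mathcal{F}_t)_{t\ge0}$ and $\mathbb{G}=(\mathcal{G}_t)_{t\ge0}$ be filtrations and $\mathcal{H}$ a $\sigma$-field. Suppose there is a dense set $\mathbb{T}\subset[0,\infty)$ such that $\mathcal{F}_t$ is conditionally independent of $\mathcal{H}$ given $\mathcal{G}_t$ for every $t\in\mathbb{T}$. Then $\mathcal{F}_{t+}$ is conditionally independent of $\mathcal{H}$ given $\mathcal{G}_{t+}$ for every $t\ge0$.
   Context: For a filtration $\mathbb{F}$, $\mathcal{F}_{t+}=\bigcap_{s>t}\mathcal{F}_s$. *)

theory Defs
  imports "HOL-Probability.Probability"
begin

definition filtration_on :: "'a measure \<Rightarrow> (real \<Rightarrow> 'a measure) \<Rightarrow> bool" where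
  "filtration_on M F \<longleftrightarrow> (\<forall>t\<ge>0. subalgebra M (F t)) \<and>
     (\<forall>s t. 0 \<le> s \<longrightarrow> s \<le> t \<longrightarrow> sets (F s) \<subseteq> sets (F t))"

definition right_lim :: "'a measure \<Rightarrow> (real \<Rightarrow> 'a measure) \<Rightarrow> real \<Rightarrow> 'a measure" where
  "right_lim M F t = sigma (space M) (\<Inter>s\<in>{t<..}. sets (F s))"

definition cond_indep :: "'a measure \<Rightarrow> 'a measure \<Rightarrow> 'a measure \<Rightarrow> 'a measure \<Rightarrow> bool" where
  "cond_indep M F H G \<longleftrightarrow> (\<forall>A\<in>sets F. \<forall>B\<in>sets H.
     AE x in M. real_cond_exp M G (indicator (A \<inter> B)) x
        = real_cond_exp M G (indicator A) x * real_cond_exp M G (indicator B) x)"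

end

theory Submission
  imports Defs
begin

(* For t >= 0 choose s_n in T decreasing to t. Then F_{t+} is contained in every F_{s_n}, and
   G_{t+} is the intersection of the decreasing sigma-algebras G_n := G_{s_n}. The identity
   E[1_{A \<inter> B} | G_n] = E[1_A | G_n] E[1_B | G_n] passes to the limit once Z_n = E[X | G_n]
   converges to E[X | G_{t+}] almost surely along subsequences, for bounded X.
   Conditional expectations given nested sigma-algebras are nested orthogonal projections, so
   ||Z_n - Z_m||^2 = ||Z_n||^2 - ||Z_m||^2 in L^2 for n <= m; these norms decrease, hence (Z_n)
   is Cauchy in L^2, so in L^1, and a subsequence converges almost surely. The limit is
   G_n-measurable for every n, hence G_{t+}-measurable, and has the integrals of X over the sets
   of G_{t+}, so it is E[X | G_{t+}]. *)

lemma lim_ignore_initial_segment: "lim (\<lambda>n. f (n + k)) = lim f"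
  unfolding lim_def by (metis LIMSEQ_ignore_initial_segment LIMSEQ_offset)

lemma decseq_from_right_in_dense:
  fixes T :: "real set"
  assumes dense: "{t<..} \<subseteq> closure T"
  obtains s where "decseq s" "\<And>n. s n \<in> T" "\<And>n. t < s n" "s \<longlonglongrightarrow> t"
proof -
  have between: "\<exists>y. y \<in> T \<and> t < y \<and> y < a" if "t < a" for a
  proof -
    have "(t + a) / 2 \<in> {t<..<a}"
      using that by simp
    moreover have "(t + a) / 2 \<in> closure T"
      using that by (intro subsetD[OF dense]) simp
    ultimately have "{t<..<a} \<inter> closure T \<noteq> {}"
      by blast
    then have "{t<..<a} \<inter> T \<noteq> {}"
      by (simp add: open_Int_closure_eq_empty)
    then show ?thesis
      by auto
  qed
  have "\<exists>s. \<forall>n. (s n \<in> T \<and> t < s n \<and> s n < t + inverse (Suc n)) \<and> s (Suc n) < s n"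
  proof (rule dependent_nat_choice)
    show "\<exists>x. x \<in> T \<and> t < x \<and> x < t + inverse (Suc 0)"
      using between[of "t + 1"] by simp
    fix x n assume "x \<in> T \<and> t < x \<and> x < t + inverse (Suc n)"
    then have "t < min x (t + inverse (Suc (Suc n)))"
      by simp
    then obtain y where "y \<in> T" "t < y" "y < min x (t + inverse (Suc (Suc n)))"
      using between by blast
    then show "\<exists>y. (y \<in> T \<and> t < y \<and> y < t + inverse (Suc (Suc n))) \<and> y < x"
      by auto
  qed
  then obtain s where s: "\<And>n. s n \<in> T" "\<And>n. t < s n" "\<And>n. s n < t + inverse (Suc n)"
    and dec: "\<And>n. s (Suc n) < s n"
    by blast
  have "s \<longlonglongrightarrow> t"
  proof (rule real_tendsto_sandwich[where f="\<lambda>_. t" and h="\<lambda>n. t + inverse (Suc n)"])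
    show "eventually (\<lambda>n. t \<le> s n) sequentially"
      using s(2) by (simp add: less_imp_le)
    show "eventually (\<lambda>n. s n \<le> t + inverse (Suc n)) sequentially"
      using s(3) by (simp add: less_imp_le)
    show "(\<lambda>n. t + inverse (Suc n)) \<longlonglongrightarrow> t"
      using tendsto_add[OF tendsto_const LIMSEQ_inverse_real_of_nat, of t] by simp
  qed simp
  moreover have "decseq s"
    using dec by (intro decseq_SucI less_imp_le)
  ultimately show ?thesis
    using s that by blast
qed

lemma (in prob_space) sigma_finite_subalgebra_of_subalgebra:
  "subalgebra M F \<Longrightarrow> sigma_finite_subalgebra M F"
  by (intro finite_measure_subalgebra_is_sigma_finite)
     (simp add: finite_measure_subalgebra_def finite_measure_subalgebra_axioms_def)

lemma (in finite_measure) integrable_mult_of_AE_abs_le: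
  fixes f g :: "'a \<Rightarrow> real"
  assumes "f \<in> borel_measurable M" "g \<in> borel_measurable M"
    and "AE x in M. \<bar>f x\<bar> \<le> a" "AE x in M. \<bar>g x\<bar> \<le> b"
  shows "integrable M (\<lambda>x. f x * g x)"
proof (rule integrable_const_bound[where B="a * b"])
  show "AE x in M. norm (f x * g x) \<le> a * b"
    using assms(3,4) by eventually_elim (auto simp: abs_mult intro: mult_mono')
qed (use assms(1,2) in simp)

lemma (in prob_space) integral_abs_squared_le:
  fixes f :: "'a \<Rightarrow> real"
  assumes "f \<in> borel_measurable M" and "integrable M (\<lambda>x. (f x)\<^sup>2)"
  shows "(\<integral>x. \<bar>f x\<bar> \<partial>M)\<^sup>2 \<le> (\<integral>x. (f x)\<^sup>2 \<partial>M)"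
  using jensens_inequality[where q=power2 and I=UNIV and X="\<lambda>x. \<bar>f x\<bar>"]
    square_integrable_imp_integrable[OF assms] assms(2) convex_power2
  by simp

lemma (in prob_space) real_cond_exp_abs_le_const:
  fixes X :: "'a \<Rightarrow> real"
  assumes "subalgebra M F" and [measurable]: "X \<in> borel_measurable M"
    and bound: "\<And>x. x \<in> space M \<Longrightarrow> \<bar>X x\<bar> \<le> c"
  shows "AE x in M. \<bar>real_cond_exp M F X x\<bar> \<le> c"
proof -
  interpret sigma_finite_subalgebra M F
    using assms(1) by (rule sigma_finite_subalgebra_of_subalgebra)
  have X: "integrable M X"
    using bound by (intro integrable_const_bound[where B=c]) auto
  have "AE x in M. - c \<le> real_cond_exp M F X x"
    by (intro real_cond_exp_ge_c X AE_I2) (use bound in \<open>fastforce simp: abs_le_iff\<close>)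
  moreover have "AE x in M. real_cond_exp M F X x \<le> c"
    by (intro real_cond_exp_le_c X AE_I2) (use bound in \<open>fastforce simp: abs_le_iff\<close>)
  ultimately show ?thesis
    by eventually_elim auto
qed

lemma (in prob_space) integral_real_cond_exp_diff_square:
  fixes X :: "'a \<Rightarrow> real"
  assumes sub: "subalgebra M F" "subalgebra M F'" and "sets F' \<subseteq> sets F"
    and [measurable]: "X \<in> borel_measurable M"
    and bound: "\<And>x. x \<in> space M \<Longrightarrow> \<bar>X x\<bar> \<le> c"
  shows "(\<integral>x. (real_cond_exp M F X x - real_cond_exp M F' X x)\<^sup>2 \<partial>M)
    = (\<integral>x. (real_cond_exp M F X x)\<^sup>2 \<partial>M) - (\<integral>x. (real_cond_exp M F' X x)\<^sup>2 \<partial>M)"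
proof -
  interpret F: sigma_finite_subalgebra M F
    using sub(1) by (rule sigma_finite_subalgebra_of_subalgebra)
  interpret F': sigma_finite_subalgebra M F'
    using sub(2) by (rule sigma_finite_subalgebra_of_subalgebra)
  define Z where "Z = real_cond_exp M F X"
  define Z' where "Z' = real_cond_exp M F' X"
  have "subalgebra F F'"
    using sub \<open>sets F' \<subseteq> sets F\<close> by (simp add: subalgebra_def)
  then have [measurable]: "Z' \<in> borel_measurable F"
    unfolding Z'_def by (rule measurable_from_subalg) simp
  have [measurable]: "Z \<in> borel_measurable M" "Z' \<in> borel_measurable M"
    unfolding Z_def Z'_def by simp_all
  have bounds: "AE x in M. \<bar>Z x\<bar> \<le> c" "AE x in M. \<bar>Z' x\<bar> \<le> c" "AE x in M. \<bar>X x\<bar> \<le> c"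
    unfolding Z_def Z'_def using sub bound by (auto intro: real_cond_exp_abs_le_const)
  have "(\<integral>x. Z' x * Z x \<partial>M) = (\<integral>x. Z' x * X x \<partial>M)"
    unfolding Z_def using bounds by (intro F.real_cond_exp_intg(2) integrable_mult_of_AE_abs_le) auto
  also have "\<dots> = (\<integral>x. Z' x * Z' x \<partial>M)"
    using F'.real_cond_exp_intg(2)[OF integrable_mult_of_AE_abs_le[OF _ _ bounds(2,3)]]
    by (simp add: Z'_def)
  finally have cross: "(\<integral>x. Z' x * Z x \<partial>M) = (\<integral>x. Z' x * Z' x \<partial>M)" .
  have "(\<integral>x. (Z x - Z' x)\<^sup>2 \<partial>M) = (\<integral>x. Z x * Z x - 2 * (Z' x * Z x) + Z' x * Z' x \<partial>M)"
    by (simp add: power2_eq_square algebra_simps)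
  also have "\<dots> = (\<integral>x. Z x * Z x \<partial>M) - 2 * (\<integral>x. Z' x * Z x \<partial>M) + (\<integral>x. Z' x * Z' x \<partial>M)"
    using bounds by (simp add: integrable_mult_of_AE_abs_le)
  finally show ?thesis
    unfolding Z_def[symmetric] Z'_def[symmetric] cross by (simp add: power2_eq_square)
qed

locale decreasing_subalgebras = prob_space M for M :: "'a measure" +
  fixes G :: "nat \<Rightarrow> 'a measure" and G_inf :: "'a measure"
  assumes subalgebra_G: "subalgebra M (G n)"
    and decseq_G: "decseq (\<lambda>n. sets (G n))"
    and subalgebra_G_inf: "subalgebra M G_inf"
    and sets_G_inf: "sets G_inf = (\<Inter>n. sets (G n))"
begin

lemma sigma_finite_G: "sigma_finite_subalgebra M (G n)"
  using subalgebra_G by (rule sigma_finite_subalgebra_of_subalgebra)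

lemma integral_real_cond_exp_G_diff_square:
  fixes X :: "'a \<Rightarrow> real"
  assumes "i \<le> j" and "X \<in> borel_measurable M" and "\<And>x. x \<in> space M \<Longrightarrow> \<bar>X x\<bar> \<le> c"
  shows "(\<integral>x. (real_cond_exp M (G i) X x - real_cond_exp M (G j) X x)\<^sup>2 \<partial>M)
    = (\<integral>x. (real_cond_exp M (G i) X x)\<^sup>2 \<partial>M) - (\<integral>x. (real_cond_exp M (G j) X x)\<^sup>2 \<partial>M)"
  using subalgebra_G subalgebra_G _ assms(2,3)
proof (rule integral_real_cond_exp_diff_square)
  show "sets (G j) \<subseteq> sets (G i)"
    using decseq_G \<open>i \<le> j\<close> by (simp add: decseq_def)
qed

lemma decseq_integral_real_cond_exp_G_square:
  fixes X :: "'a \<Rightarrow> real"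
  assumes "X \<in> borel_measurable M" and "\<And>x. x \<in> space M \<Longrightarrow> \<bar>X x\<bar> \<le> c"
  shows "decseq (\<lambda>n. \<integral>x. (real_cond_exp M (G n) X x)\<^sup>2 \<partial>M)"
proof (rule antimonoI)
  fix i j :: nat assume "i \<le> j"
  have "0 \<le> (\<integral>x. (real_cond_exp M (G i) X x - real_cond_exp M (G j) X x)\<^sup>2 \<partial>M)"
    by (rule integral_nonneg_AE) simp
  then show "(\<integral>x. (real_cond_exp M (G j) X x)\<^sup>2 \<partial>M) \<le> (\<integral>x. (real_cond_exp M (G i) X x)\<^sup>2 \<partial>M)"
    using integral_real_cond_exp_G_diff_square[OF \<open>i \<le> j\<close> assms] by simp
qed

lemma real_cond_exp_G_L1_Cauchy:
  fixes X :: "'a \<Rightarrow> real"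
  assumes [measurable]: "X \<in> borel_measurable M"
    and bound: "\<And>x. x \<in> space M \<Longrightarrow> \<bar>X x\<bar> \<le> c"
    and "0 < e"
  shows "\<exists>N. \<forall>i\<ge>N. \<forall>j\<ge>N. (\<integral>x. \<bar>real_cond_exp M (G i) X x - real_cond_exp M (G j) X x\<bar> \<partial>M) < e"
proof -
  define Z where "Z n = real_cond_exp M (G n) X" for n
  define d where "d n = (\<integral>x. (Z n x)\<^sup>2 \<partial>M)" for n
  have [measurable]: "Z n \<in> borel_measurable M" for n
    unfolding Z_def by simp
  have Z_bound: "AE x in M. \<bar>Z n x\<bar> \<le> c" for n
    unfolding Z_def using subalgebra_G _ bound by (rule real_cond_exp_abs_le_const) simp
  have Z_diff_bound: "AE x in M. \<bar>Z i x - Z j x\<bar> \<le> 2 * c" for i j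
    using Z_bound[of i] Z_bound[of j] by eventually_elim linarith
  have "decseq d"
    unfolding d_def Z_def using assms(1) bound by (rule decseq_integral_real_cond_exp_G_square)
  moreover have "0 \<le> d n" for n
    unfolding d_def by (rule integral_nonneg_AE) simp
  ultimately obtain L where "d \<longlonglongrightarrow> L"
    using decseq_convergent[of d 0] by blast
  then have "Cauchy d"
    by (rule LIMSEQ_imp_Cauchy)
  then obtain N where N: "\<And>i j. i \<ge> N \<Longrightarrow> j \<ge> N \<Longrightarrow> \<bar>d i - d j\<bar> < e\<^sup>2"
    using \<open>0 < e\<close> unfolding Cauchy_def dist_real_def by (meson zero_less_power)
  have "(\<integral>x. \<bar>Z i x - Z j x\<bar> \<partial>M) < e" if "i \<ge> N" "j \<ge> N" for i j
  proof -
    have "integrable M (\<lambda>x. (Z i x - Z j x)\<^sup>2)"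
      using integrable_mult_of_AE_abs_le[OF _ _ Z_diff_bound Z_diff_bound]
      by (simp add: power2_eq_square)
    then have "(\<integral>x. \<bar>Z i x - Z j x\<bar> \<partial>M)\<^sup>2 \<le> (\<integral>x. (Z i x - Z j x)\<^sup>2 \<partial>M)"
      by (intro integral_abs_squared_le) simp
    also have "\<dots> = \<bar>d i - d j\<bar>"
      using integral_real_cond_exp_G_diff_square[OF _ assms(1) bound, of i j]
        integral_real_cond_exp_G_diff_square[OF _ assms(1) bound, of j i]
        \<open>decseq d\<close>[THEN antimonoD, of i j] \<open>decseq d\<close>[THEN antimonoD, of j i]
      by (cases "i \<le> j") (auto simp: Z_def d_def power2_commute)
    also have "\<dots> < e\<^sup>2"
      using N[OF that] .
    finally show ?thesis
      using \<open>0 < e\<close> by (simp add: power_less_imp_less_base)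
  qed
  then show ?thesis
    unfolding Z_def by blast
qed

lemma real_cond_exp_G_AE_convergent_subseq:
  fixes X :: "'a \<Rightarrow> real" and q :: "nat \<Rightarrow> nat"
  assumes "strict_mono q" and X_meas [measurable]: "X \<in> borel_measurable M"
    and bound: "\<And>x. x \<in> space M \<Longrightarrow> \<bar>X x\<bar> \<le> c"
  shows "\<exists>r. strict_mono r \<and> (AE x in M. convergent (\<lambda>k. real_cond_exp M (G (q (r k))) X x))"
proof -
  have "integrable M X"
    using bound by (intro integrable_const_bound[where B=c]) auto
  then have "integrable M (real_cond_exp M (G n) X)" for n
    by (rule sigma_finite_subalgebra.real_cond_exp_int(1)[OF sigma_finite_G])
  then obtain r where "strict_mono r" "AE x in M. Cauchy (\<lambda>k. real_cond_exp M (G (q (r k))) X x)"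
  proof (rule cauchy_L1_AE_cauchy_subseq)
    fix e :: real assume "0 < e"
    from real_cond_exp_G_L1_Cauchy[OF X_meas bound this] obtain N where N:
      "\<And>i j. i \<ge> N \<Longrightarrow> j \<ge> N \<Longrightarrow>
        (\<integral>x. \<bar>real_cond_exp M (G i) X x - real_cond_exp M (G j) X x\<bar> \<partial>M) < e"
      by blast
    have "N \<le> q i" if "N \<le> i" for i
      using seq_suble[OF \<open>strict_mono q\<close>, of i] that by simp
    with N show "\<exists>N. \<forall>i\<ge>N. \<forall>j\<ge>N.
        (\<integral>x. norm (real_cond_exp M (G (q i)) X x - real_cond_exp M (G (q j)) X x) \<partial>M) < e"
      by auto
  qed
  then show ?thesis
    by (auto simp: Cauchy_convergent_iff elim: eventually_mono)
qed

lemma borel_measurable_lim_G_inf: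
  fixes f :: "nat \<Rightarrow> 'a \<Rightarrow> real" and r :: "nat \<Rightarrow> nat"
  assumes "strict_mono r" and f: "\<And>k. f k \<in> borel_measurable (G (r k))"
  shows "(\<lambda>x. lim (\<lambda>k. f k x)) \<in> borel_measurable G_inf"
proof -
  have "(\<lambda>x. lim (\<lambda>k. f k x)) \<in> borel_measurable (G n)" for n
  proof -
    have "subalgebra (G n) (G (r (k + n)))" for k
      using subalgebra_G decseq_G seq_suble[OF \<open>strict_mono r\<close>, of "k + n"]
      by (auto simp: subalgebra_def decseq_def)
    then have [measurable]: "f (k + n) \<in> borel_measurable (G n)" for k
      using f by (rule measurable_from_subalg)
    have "(\<lambda>x. lim (\<lambda>k. f k x)) = (\<lambda>x. lim (\<lambda>k. f (k + n) x))"
      by (intro ext lim_ignore_initial_segment[symmetric])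
    then show ?thesis
      by (simp only:) measurable
  qed
  moreover have "space (G n) = space G_inf" for n
    using subalgebra_G subalgebra_G_inf by (simp add: subalgebra_def)
  ultimately show ?thesis
    by (auto simp: measurable_def sets_G_inf)
qed

lemma real_cond_exp_G_inf_eq_limit:
  fixes X W :: "'a \<Rightarrow> real" and r :: "nat \<Rightarrow> nat"
  assumes [measurable]: "X \<in> borel_measurable M"
    and bound: "\<And>x. x \<in> space M \<Longrightarrow> \<bar>X x\<bar> \<le> c"
    and W_meas [measurable]: "W \<in> borel_measurable G_inf"
    and lim: "AE x in M. (\<lambda>k. real_cond_exp M (G (r k)) X x) \<longlonglongrightarrow> W x"
  shows "AE x in M. real_cond_exp M G_inf X x = W x"
proof -
  interpret G_inf: sigma_finite_subalgebra M G_inf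
    using subalgebra_G_inf by (rule sigma_finite_subalgebra_of_subalgebra)
  define Z where "Z k = real_cond_exp M (G (r k)) X" for k
  have [measurable]: "Z k \<in> borel_measurable M" for k
    unfolding Z_def by simp
  have [measurable]: "W \<in> borel_measurable M"
    using subalgebra_G_inf W_meas by (rule measurable_from_subalg)
  have Z_bound: "AE x in M. norm (Z k x) \<le> c" for k
    unfolding Z_def real_norm_def using subalgebra_G _ bound by (rule real_cond_exp_abs_le_const) simp
  have Z_lim: "AE x in M. (\<lambda>k. Z k x) \<longlonglongrightarrow> W x"
    using lim by (simp add: Z_def)
  show ?thesis
  proof (rule G_inf.real_cond_exp_charact)
    show X: "integrable M X"
      using bound by (intro integrable_const_bound[where B=c]) auto
    show "integrable M W"
      by (rule integrable_dominated_convergence[where w="\<lambda>_. c", OF _ _ _ Z_lim Z_bound]) simp_all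
    fix A assume "A \<in> sets G_inf"
    then have A: "A \<in> sets (G n)" "A \<in> sets M" for n
      using subalgebra_G_inf by (auto simp: sets_G_inf subalgebra_def)
    have "(\<lambda>k. \<integral>x. indicator A x * Z k x \<partial>M) \<longlonglongrightarrow> (\<integral>x. indicator A x * W x \<partial>M)"
    proof (rule integral_dominated_convergence[where w="\<lambda>_. c"])
      show "AE x in M. (\<lambda>k. indicator A x * Z k x) \<longlonglongrightarrow> indicator A x * W x"
        using Z_lim by eventually_elim (rule tendsto_mult[OF tendsto_const])
      show "AE x in M. norm (indicator A x * Z k x) \<le> c" for k
        using Z_bound[of k] by eventually_elim (auto simp: indicator_def)
    qed (use A in simp_all)
    moreover have "(\<integral>x\<in>A. X x \<partial>M) = (\<integral>x\<in>A. Z k x \<partial>M)" for k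
      unfolding Z_def using X A(1)
      by (rule sigma_finite_subalgebra.real_cond_exp_intA[OF sigma_finite_G])
    ultimately show "(\<integral>x\<in>A. X x \<partial>M) = (\<integral>x\<in>A. W x \<partial>M)"
      by (simp add: set_lebesgue_integral_def LIMSEQ_const_iff)
  qed fact
qed

lemma real_cond_exp_G_AE_tendsto_subseq:
  fixes X :: "'a \<Rightarrow> real" and q :: "nat \<Rightarrow> nat"
  assumes "strict_mono q" and X_meas: "X \<in> borel_measurable M"
    and bound: "\<And>x. x \<in> space M \<Longrightarrow> \<bar>X x\<bar> \<le> c"
  shows "\<exists>r. strict_mono r \<and>
    (AE x in M. (\<lambda>k. real_cond_exp M (G (q (r k))) X x) \<longlonglongrightarrow> real_cond_exp M G_inf X x)"
proof -
  obtain r where r: "strict_mono r"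
    and conv: "AE x in M. convergent (\<lambda>k. real_cond_exp M (G (q (r k))) X x)"
    using real_cond_exp_G_AE_convergent_subseq[OF assms] by blast
  define W where "W x = lim (\<lambda>k. real_cond_exp M (G (q (r k))) X x)" for x
  have lim: "AE x in M. (\<lambda>k. real_cond_exp M (G (q (r k))) X x) \<longlonglongrightarrow> W x"
    using conv by (auto simp: W_def convergent_LIMSEQ_iff elim: eventually_mono)
  have "strict_mono (q \<circ> r)"
    using \<open>strict_mono q\<close> r by (rule strict_mono_o)
  then have "W \<in> borel_measurable G_inf"
    unfolding W_def by (rule borel_measurable_lim_G_inf[where f="\<lambda>k. real_cond_exp M (G (q (r k))) X"]) simp
  then have "AE x in M. real_cond_exp M G_inf X x = W x"
    using X_meas bound lim by (intro real_cond_exp_G_inf_eq_limit[where r="q \<circ> r"]) simp_all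
  with lim r show ?thesis
    by (auto elim: eventually_mono)
qed

lemma AE_real_cond_exp_G_inf_mult:
  fixes X Y Z :: "'a \<Rightarrow> real"
  assumes "X \<in> borel_measurable M" "Y \<in> borel_measurable M" "Z \<in> borel_measurable M"
    and "\<And>x. x \<in> space M \<Longrightarrow> \<bar>X x\<bar> \<le> c"
    and "\<And>x. x \<in> space M \<Longrightarrow> \<bar>Y x\<bar> \<le> c"
    and "\<And>x. x \<in> space M \<Longrightarrow> \<bar>Z x\<bar> \<le> c"
    and mult: "AE x in M. \<forall>n. real_cond_exp M (G n) Z x
      = real_cond_exp M (G n) X x * real_cond_exp M (G n) Y x"
  shows "AE x in M. real_cond_exp M G_inf Z x = real_cond_exp M G_inf X x * real_cond_exp M G_inf Y x"
proof -
  obtain r1 where r1: "strict_mono r1"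
    "AE x in M. (\<lambda>k. real_cond_exp M (G (r1 k)) Z x) \<longlonglongrightarrow> real_cond_exp M G_inf Z x"
    using real_cond_exp_G_AE_tendsto_subseq[OF strict_mono_id assms(3,6)] by auto
  obtain r2 where r2: "strict_mono r2"
    "AE x in M. (\<lambda>k. real_cond_exp M (G (r1 (r2 k))) X x) \<longlonglongrightarrow> real_cond_exp M G_inf X x"
    using real_cond_exp_G_AE_tendsto_subseq[OF r1(1) assms(1,4)] by auto
  obtain r3 where r3: "strict_mono r3"
    "AE x in M. (\<lambda>k. real_cond_exp M (G (r1 (r2 (r3 k)))) Y x) \<longlonglongrightarrow> real_cond_exp M G_inf Y x"
    using real_cond_exp_G_AE_tendsto_subseq[OF strict_mono_o[OF r1(1) r2(1)] assms(2,5)] by auto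
  define s where "s = r1 \<circ> r2 \<circ> r3"
  show ?thesis
    using r1(2) r2(2) r3(2) mult
  proof eventually_elim
    case (elim x)
    have "(\<lambda>k. real_cond_exp M (G (s k)) Z x) \<longlonglongrightarrow> real_cond_exp M G_inf Z x"
      using LIMSEQ_subseq_LIMSEQ[OF elim(1) strict_mono_o[OF r2(1) r3(1)]] by (simp add: s_def o_def)
    moreover have "(\<lambda>k. real_cond_exp M (G (s k)) X x) \<longlonglongrightarrow> real_cond_exp M G_inf X x"
      using LIMSEQ_subseq_LIMSEQ[OF elim(2) r3(1)] by (simp add: s_def o_def)
    then have "(\<lambda>k. real_cond_exp M (G (s k)) Z x)
        \<longlonglongrightarrow> real_cond_exp M G_inf X x * real_cond_exp M G_inf Y x"
      using tendsto_mult[OF _ elim(3)] elim(4) by (simp add: s_def)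
    ultimately show ?case
      by (rule LIMSEQ_unique)
  qed
qed

lemma cond_indep_G_inf:
  assumes indep: "\<And>n. cond_indep M (F n) H (G n)"
    and F_inf: "\<And>n. sets F_inf \<subseteq> sets (F n)" "sets F_inf \<subseteq> sets M"
    and H: "sets H \<subseteq> sets M"
  shows "cond_indep M F_inf H G_inf"
  unfolding cond_indep_def
proof (intro ballI)
  fix A B assume "A \<in> sets F_inf" "B \<in> sets H"
  then have "A \<in> sets M" "B \<in> sets M" and A: "A \<in> sets (F n)" for n
    using F_inf H by blast+
  moreover have "AE x in M. \<forall>n. real_cond_exp M (G n) (indicator (A \<inter> B)) x
      = real_cond_exp M (G n) (indicator A) x * real_cond_exp M (G n) (indicator B) x"
    unfolding AE_all_countable using indep A \<open>B \<in> sets H\<close> by (auto simp: cond_indep_def)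
  ultimately show "AE x in M. real_cond_exp M G_inf (indicator (A \<inter> B)) x
      = real_cond_exp M G_inf (indicator A) x * real_cond_exp M G_inf (indicator B) x"
    by (intro AE_real_cond_exp_G_inf_mult[where c=1]) auto
qed

end

lemma filtration_on_subalgebra: "filtration_on M F \<Longrightarrow> 0 \<le> t \<Longrightarrow> subalgebra M (F t)"
  by (simp add: filtration_on_def)

lemma filtration_on_mono:
  "filtration_on M F \<Longrightarrow> 0 \<le> s \<Longrightarrow> s \<le> t \<Longrightarrow> sets (F s) \<subseteq> sets (F t)"
  by (simp add: filtration_on_def)

lemma
  assumes F: "filtration_on M F" and "0 \<le> t"
  shows sets_right_lim: "sets (right_lim M F t) = (\<Inter>u\<in>{t<..}. sets (F u))"
    and subalgebra_right_lim: "subalgebra M (right_lim M F t)"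
proof -
  define A where "A = (\<Inter>u\<in>{t<..}. sets (F u))"
  have sub: "subalgebra M (F u)" if "t < u" for u
    using F \<open>0 \<le> t\<close> that by (intro filtration_on_subalgebra) auto
  have "A \<subseteq> sets (F (t + 1))"
    unfolding A_def by (rule INT_lower) simp
  then have A_sets: "A \<subseteq> sets M"
    using sub[of "t + 1"] by (auto simp: subalgebra_def)
  then have A_Pow: "A \<subseteq> Pow (space M)"
    using sets.sets_into_space by blast
  have "sigma_sets (space M) A \<subseteq> sets (F u)" if "t < u" for u
    using sub[OF that] sets.sigma_sets_subset[of A "F u"] that
    by (auto simp: A_def subalgebra_def)
  then have "sigma_sets (space M) A = A"
    using sigma_sets_superset_generator[of A "space M"] by (auto simp: A_def)
  then show sets_eq: "sets (right_lim M F t) = (\<Inter>u\<in>{t<..}. sets (F u))"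
    using A_Pow by (simp add: right_lim_def A_def[symmetric])
  show "subalgebra M (right_lim M F t)"
    using A_sets A_Pow sets_eq
    by (simp add: subalgebra_def right_lim_def space_measure_of_conv A_def[symmetric])
qed

lemma sets_right_lim_eq_INT_seq:
  fixes s :: "nat \<Rightarrow> real"
  assumes F: "filtration_on M F" and "0 \<le> t" and s: "\<And>n. t < s n" "s \<longlonglongrightarrow> t"
  shows "sets (right_lim M F t) = (\<Inter>n. sets (F (s n)))"
  unfolding sets_right_lim[OF assms(1,2)]
proof (intro equalityI INT_greatest)
  show "(\<Inter>u\<in>{t<..}. sets (F u)) \<subseteq> sets (F (s n))" for n
    using s(1) by (intro INT_lower) simp
  fix u assume "u \<in> {t<..}"
  then have "eventually (\<lambda>n. s n < u) sequentially"
    using s(2) by (intro order_tendstoD) auto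
  then obtain n where "s n < u"
    by (meson eventually_sequentially order_refl)
  then have "sets (F (s n)) \<subseteq> sets (F u)"
    using F \<open>0 \<le> t\<close> s(1)[of n] by (intro filtration_on_mono) auto
  then show "(\<Inter>n. sets (F (s n))) \<subseteq> sets (F u)"
    by blast
qed

lemma decreasing_subalgebras_right_lim:
  fixes s :: "nat \<Rightarrow> real"
  assumes "prob_space M" and G: "filtration_on M G" and "0 \<le> t"
    and s: "decseq s" "\<And>n. t < s n" "s \<longlonglongrightarrow> t"
  shows "decreasing_subalgebras M (\<lambda>n. G (s n)) (right_lim M G t)"
proof (intro decreasing_subalgebras.intro decreasing_subalgebras_axioms.intro)
  have s_nonneg: "0 \<le> s n" for n
    using \<open>0 \<le> t\<close> s(2)[of n] by simp
  then show "subalgebra M (G (s n))" for n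
    using G by (rule filtration_on_subalgebra[rotated])
  show "decseq (\<lambda>n. sets (G (s n)))"
  proof (rule antimonoI)
    fix m n :: nat assume "m \<le> n"
    then show "sets (G (s n)) \<le> sets (G (s m))"
      using s(1) by (intro filtration_on_mono[OF G s_nonneg]) (simp add: decseq_def)
  qed
  show "subalgebra M (right_lim M G t)"
    using G \<open>0 \<le> t\<close> by (rule subalgebra_right_lim)
  show "sets (right_lim M G t) = (\<Inter>n. sets (G (s n)))"
    using G \<open>0 \<le> t\<close> s(2,3) by (rule sets_right_lim_eq_INT_seq)
qed fact

theorem lemma3p7:
  fixes M :: "'a measure" and F G :: "real \<Rightarrow> 'a measure" and H :: "'a measure"
    and T :: "real set"
  assumes "prob_space M"
    and "filtration_on M F" and "filtration_on M G"
    and "subalgebra M H"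
    and "T \<subseteq> {0..}" and "closure T = {0..}"
    and "\<And>t. t \<in> T \<Longrightarrow> cond_indep M (F t) H (G t)"
  shows "\<forall>t\<ge>0. cond_indep M (right_lim M F t) H (right_lim M G t)"
proof (intro allI impI)
  fix t :: real assume "0 \<le> t"
  then have "{t<..} \<subseteq> closure T"
    unfolding assms(6) by (simp add: subset_eq)
  then obtain s where s: "decseq s" "\<And>n. s n \<in> T" "\<And>n. t < s n" "s \<longlonglongrightarrow> t"
    using decseq_from_right_in_dense by blast
  interpret decreasing_subalgebras M "\<lambda>n. G (s n)" "right_lim M G t"
    using assms(1,3) \<open>0 \<le> t\<close> s(1,3,4) by (rule decreasing_subalgebras_right_lim)
  show "cond_indep M (right_lim M F t) H (right_lim M G t)"
  proof (rule cond_indep_G_inf)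
    show "cond_indep M (F (s n)) H (G (s n))" for n
      using assms(7) s(2) .
    show "sets (right_lim M F t) \<subseteq> sets (F (s n))" for n
      using sets_right_lim_eq_INT_seq[OF assms(2) \<open>0 \<le> t\<close> s(3,4)] by blast
    show "sets (right_lim M F t) \<subseteq> sets M" "sets H \<subseteq> sets M"
      using subalgebra_right_lim[OF assms(2) \<open>0 \<le> t\<close>] assms(4) by (auto simp: subalgebra_def)
  qed
qed

end
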